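(* Let $d\ge 6$, $c\in[d]$, and let $\mathcal{F}\subseteq 2^{[n]}$ be a hereditary family with $\delta(\mathcal{F})\ge 2^{d-1}-c+1$. Then every bad vertex $x$ is contained in exactly one pile, namely $N(x)$. In particular, every vertex of $[n]$ that is not contained in any pile is good.
   Context: A family $\mathcal{F}\subseteq 2^{[n]}$ is hereditary if $F'\subseteq F\in\mathcal{F}$ implies $F'\in\mathcal{F}$. $d_{\mathcal{F}}(x)=|\{F\in\mathcal{F}:x\in F\}|$, $\delta(\mathcal{F})=\min_x d_{\mathcal{F}}(x)$, $N(x)=\bigcup_{x\in F\in\mathcal{F}}F$. Under the hypothesis $\delta(\mathcal{F})\ge 2^{d-1}-c+1$ every vertex has $|N(x)|\ge d$; a vertex $x$ is good if $|N(x)|\ge d+1$ and bad if $|N(x)|=d$. A set $P\subseteq[n]$ with $|P|=d$ is a pile of $\mathcal{F}$ if $P\subseteq N(y)$ for every $y\in P$, and there exists $z\in P$ with $N(z)=P$. *)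

theory Defs
  imports Main
begin

definition hereditary :: "nat set set \<Rightarrow> bool" where
  "hereditary F \<longleftrightarrow> (\<forall>A B. A \<subseteq> B \<and> B \<in> F \<longrightarrow> A \<in> F)"

definition deg :: "nat set set \<Rightarrow> nat \<Rightarrow> nat" where
  "deg F x = card {A \<in> F. x \<in> A}"

definition mindeg :: "nat set set \<Rightarrow> nat \<Rightarrow> nat" where
  "mindeg F n = Min (deg F ` {1..n})"

definition nbhd :: "nat set set \<Rightarrow> nat \<Rightarrow> nat set" where
  "nbhd F x = \<Union> {A \<in> F. x \<in> A}"

definition good :: "nat set set \<Rightarrow> nat \<Rightarrow> nat \<Rightarrow> bool" where
  "good F d x \<longleftrightarrow> card (nbhd F x) \<ge> d + 1"

definition bad :: "nat set set \<Rightarrow> nat \<Rightarrow> nat \<Rightarrow> bool" where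
  "bad F d x \<longleftrightarrow> card (nbhd F x) = d"

definition pile :: "nat set set \<Rightarrow> nat \<Rightarrow> nat \<Rightarrow> nat set \<Rightarrow> bool" where
  "pile F n d P \<longleftrightarrow> P \<subseteq> {1..n} \<and> card P = d \<and> (\<forall>y\<in>P. P \<subseteq> nbhd F y)
     \<and> (\<exists>z\<in>P. nbhd F z = P)"

end

theory Submission
  imports Defs
begin

text \<open>
  The members of \<open>F\<close> containing \<open>x\<close> are subsets of \<open>N(x)\<close> containing \<open>x\<close>, so
  \<open>deg(x) \<le> 2^(|N(x)|-1)\<close>; since \<open>d \<le> 2^(d-3)\<close> for \<open>d \<ge> 6\<close>, the degree bound exceeds
  \<open>2^(d-2)\<close> and forces \<open>|N(x)| \<ge> d\<close>. If \<open>|N(x)| = d\<close> and some \<open>y, z \<in> N(x)\<close> lie in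
  no common member with \<open>x\<close>, then the \<open>2^(d-3)\<close> supersets of \<open>{x,y,z}\<close> inside \<open>N(x)\<close>
  are all missing, contradicting \<open>deg(x) > 2^(d-1) - 2^(d-3)\<close>. Hence any two points of
  \<open>N(x)\<close> share a member, which makes \<open>N(x)\<close> a pile; a pile through \<open>x\<close> lies in \<open>N(x)\<close>
  and has the same size, so it is \<open>N(x)\<close>.
\<close>

lemma card_supersets_within:
  assumes "finite N" "T \<subseteq> N"
  shows "card {A. T \<subseteq> A \<and> A \<subseteq> N} = 2 ^ (card N - card T)"
proof -
  have "{A. T \<subseteq> A \<and> A \<subseteq> N} = (\<lambda>B. B \<union> T) ` Pow (N - T)"
    using assms(2) by (auto intro!: image_eqI[where x = "_ - T"])
  moreover have "inj_on (\<lambda>B. B \<union> T) (Pow (N - T))"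
    by (rule inj_onI) blast
  ultimately have "card {A. T \<subseteq> A \<and> A \<subseteq> N} = 2 ^ card (N - T)"
    using assms(1) by (simp add: card_image card_Pow)
  then show ?thesis
    using assms by (simp add: card_Diff_subset finite_subset)
qed

lemma self_le_two_power_minus_3:
  assumes "6 \<le> d"
  shows "d \<le> (2::nat) ^ (d - 3)"
  using assms
proof (induction d rule: dec_induct)
  case (step m)
  then have "Suc m - 3 = Suc (m - 3)" by simp
  then show ?case using step.IH by simp
qed simp

lemma mindeg_le_deg: "x \<in> {1..n} \<Longrightarrow> mindeg F n \<le> deg F x"
  unfolding mindeg_def by simp

lemma degree_bound_exceeds_powers:
  fixes D :: nat
  assumes "6 \<le> d" "c \<le> d" "2 ^ (d - 1) - c + 1 \<le> D"
  shows "2 ^ (d - 1) - 2 ^ (d - 3) < D" "2 ^ (d - 2) < D"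
proof -
  have "d - 1 = Suc (Suc (d - 3))" "d - 2 = Suc (d - 3)" using assms(1) by arith+
  then have "2 ^ (d - 1) = 4 * (2::nat) ^ (d - 3)" "2 ^ (d - 2) = 2 * (2::nat) ^ (d - 3)"
    by simp_all
  then show "2 ^ (d - 1) - 2 ^ (d - 3) < D" "2 ^ (d - 2) < D"
    using assms(2,3) self_le_two_power_minus_3[OF assms(1)] by linarith+
qed

lemma nbhd_subset: "F \<subseteq> Pow S \<Longrightarrow> nbhd F x \<subseteq> S"
  unfolding nbhd_def by auto

lemma mem_nbhd_if_deg_pos: "0 < deg F x \<Longrightarrow> x \<in> nbhd F x"
  unfolding deg_def nbhd_def by (auto dest: card_gt_0_iff[THEN iffD1])

lemma members_through_subset: "{A \<in> F. x \<in> A} \<subseteq> {A. {x} \<subseteq> A \<and> A \<subseteq> nbhd F x}"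
  unfolding nbhd_def by auto

lemma deg_le_power_card_nbhd:
  assumes "finite (nbhd F x)"
  shows "deg F x \<le> 2 ^ (card (nbhd F x) - 1)"
proof (cases "x \<in> nbhd F x")
  case True
  have "deg F x \<le> card {A. {x} \<subseteq> A \<and> A \<subseteq> nbhd F x}"
    unfolding deg_def using assms by (intro card_mono[OF _ members_through_subset]) auto
  also have "\<dots> = 2 ^ (card (nbhd F x) - 1)"
    using card_supersets_within[OF assms, of "{x}"] True by simp
  finally show ?thesis .
next
  case False
  then have "deg F x = 0" using mem_nbhd_if_deg_pos by blast
  then show ?thesis by simp
qed

lemma deg_add_missing_supersets_le:
  assumes "finite (nbhd F x)" "x \<in> T" "T \<subseteq> nbhd F x"
    and "\<forall>A\<in>F. x \<in> A \<longrightarrow> \<not> T \<subseteq> A"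
  shows "deg F x + 2 ^ (card (nbhd F x) - card T) \<le> 2 ^ (card (nbhd F x) - 1)"
proof -
  let ?N = "nbhd F x"
  let ?S = "{A. T \<subseteq> A \<and> A \<subseteq> ?N}"
  let ?U = "{A. {x} \<subseteq> A \<and> A \<subseteq> ?N}"
  have fin: "finite ?U" using assms(1) by auto
  have sub: "{A \<in> F. x \<in> A} \<union> ?S \<subseteq> ?U"
    using members_through_subset assms(2) by blast
  have "deg F x + card ?S = card ({A \<in> F. x \<in> A} \<union> ?S)"
    unfolding deg_def using assms(4) fin sub
    by (intro card_Un_disjoint[symmetric]) (auto intro: finite_subset)
  also have "\<dots> \<le> card ?U" using fin sub by (rule card_mono)
  also have "\<dots> = 2 ^ (card ?N - 1)"
    using card_supersets_within[OF assms(1), of "{x}"] assms(2,3) by auto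
  finally show ?thesis using card_supersets_within[OF assms(1,3)] by simp
qed

lemma card_nbhd_ge:
  assumes "finite (nbhd F x)" "2 ^ (d - 2) < deg F x"
  shows "d \<le> card (nbhd F x)"
proof (rule ccontr)
  assume "\<not> d \<le> card (nbhd F x)"
  then have "(2::nat) ^ (card (nbhd F x) - 1) \<le> 2 ^ (d - 2)"
    by (intro power_increasing) auto
  then show False using deg_le_power_card_nbhd[OF assms(1)] assms(2) by linarith
qed

lemma triple_in_member_if_card_nbhd_eq:
  assumes "finite (nbhd F x)" "card (nbhd F x) = d"
    and "2 ^ (d - 1) - 2 ^ (d - 3) < deg F x"
    and "y \<in> nbhd F x" "z \<in> nbhd F x"
  shows "\<exists>A\<in>F. {x, y, z} \<subseteq> A"
proof (rule ccontr)
  assume "\<not> (\<exists>A\<in>F. {x, y, z} \<subseteq> A)"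
  moreover have "x \<in> nbhd F x" using assms(3) by (intro mem_nbhd_if_deg_pos) linarith
  ultimately have "deg F x + 2 ^ (d - card {x, y, z}) \<le> 2 ^ (d - 1)"
    using deg_add_missing_supersets_le[OF assms(1), of "{x, y, z}"] assms by auto
  moreover have "(2::nat) ^ (d - 3) \<le> 2 ^ (d - card {x, y, z})"
    by (intro power_increasing) (auto simp: card_insert_if)
  ultimately show False using assms(3) by linarith
qed

lemma pile_nbhd_if_card_eq:
  assumes "nbhd F x \<subseteq> {1..n}" "card (nbhd F x) = d"
    and "2 ^ (d - 1) - 2 ^ (d - 3) < deg F x"
  shows "pile F n d (nbhd F x)"
proof -
  have fin: "finite (nbhd F x)" using assms(1) by (rule finite_subset) simp
  have "nbhd F x \<subseteq> nbhd F y" if y: "y \<in> nbhd F x" for y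
  proof
    fix z assume "z \<in> nbhd F x"
    then obtain A where "A \<in> F" "{x, y, z} \<subseteq> A"
      using triple_in_member_if_card_nbhd_eq[OF fin assms(2,3) y] by blast
    then show "z \<in> nbhd F y" unfolding nbhd_def by auto
  qed
  moreover have "x \<in> nbhd F x" using assms(3) by (intro mem_nbhd_if_deg_pos) linarith
  ultimately show ?thesis unfolding pile_def using assms(1,2) by auto
qed

lemma pile_eq_nbhd:
  assumes "pile F n d P" "x \<in> P" "finite (nbhd F x)" "card (nbhd F x) = d"
  shows "P = nbhd F x"
proof -
  have "P \<subseteq> nbhd F x" "card P = d" using assms(1,2) unfolding pile_def by auto
  then show ?thesis using assms(3,4) by (simp add: card_subset_eq)
qed

theorem mainTheorem13:
  fixes n d c :: nat and F :: "nat set set"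
  assumes "d \<ge> 6" and "1 \<le> c" and "c \<le> d"
    and "F \<subseteq> Pow {1..n}" and "hereditary F"
    and "mindeg F n \<ge> 2 ^ (d - 1) - c + 1"
  shows "(\<forall>x\<in>{1..n}. bad F d x \<longrightarrow>
            x \<in> nbhd F x \<and> pile F n d (nbhd F x) \<and>
            (\<forall>P. pile F n d P \<and> x \<in> P \<longrightarrow> P = nbhd F x))
       \<and> (\<forall>x\<in>{1..n}. (\<forall>P. pile F n d P \<longrightarrow> x \<notin> P) \<longrightarrow> good F d x)"
proof -
  have N_sub: "nbhd F x \<subseteq> {1..n}" for x using assms(4) by (rule nbhd_subset)
  then have N_fin: "finite (nbhd F x)" for x by (rule finite_subset) simp
  have deg: "2 ^ (d - 1) - 2 ^ (d - 3) < deg F x" "2 ^ (d - 2) < deg F x" if "x \<in> {1..n}" for x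
    using degree_bound_exceeds_powers[OF assms(1,3) order.trans[OF assms(6) mindeg_le_deg[OF that]]]
    by auto
  have x_in: "x \<in> nbhd F x" if "x \<in> {1..n}" for x
    using deg(2)[OF that] by (intro mem_nbhd_if_deg_pos) linarith
  have bad_pile: "pile F n d (nbhd F x)" if "x \<in> {1..n}" "bad F d x" for x
    using pile_nbhd_if_card_eq[OF N_sub _ deg(1)] that unfolding bad_def by blast
  have "good F d x" if x: "x \<in> {1..n}" and "\<forall>P. pile F n d P \<longrightarrow> x \<notin> P" for x
  proof -
    have "\<not> bad F d x" using that bad_pile x_in by blast
    then show ?thesis
      using card_nbhd_ge[OF N_fin deg(2)[OF x]] unfolding good_def bad_def by simp
  qed
  then show ?thesis
    using bad_pile x_in pile_eq_nbhd[OF _ _ N_fin] unfolding bad_def by blast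
qed

end
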